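(* For integers $b\ge a\ge 0$ and $k\ge 0$, $$\sum_{\substack{\pi\in\mathcal I_{a+b}(321)\\ \mathrm{fp}(\pi)\ge b-a\\ \mathrm{des}(\pi)=k}} q^{\mathrm{maj}(\pi)}=q^{k^2}\binom{a}{k}_q\binom{b}{k}_q.$$ Consequently, for integers $0\le\ell\le n$ with $\ell\equiv n\pmod 2$ and $k\ge0$, $$\sum_{\substack{\pi\in\mathcal I_{n}(321)\\ \mathrm{fp}(\pi)=\ell \\ \mathrm{des}(\pi)=k}} q^{\mathrm{maj}(\pi)}=q^{k^2}\left[\binom{\frac{n-\ell}{2}}{k}_q\binom{\frac{n+\ell}{2}}{k}_q-\binom{\frac{n-\ell}{2}-1}{k}_q\binom{\frac{n+\ell}{2}+1}{k}_q\right],$$ with the convention that $\binom{m}{k}_q=0$ when $m<0$.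
   Context: $\mathcal I_m(321)$ is the set of involutions in $\mathcal S_m$ avoiding $321$; $\mathrm{fp}(\pi)$ is its number of fixed points; $\mathrm{des}(\pi)$ is the number of positions $i$ with $\pi(i)>\pi(i+1)$ and $\mathrm{maj}(\pi)$ is the sum of these positions. $\binom{m}{k}_q$ is the Gaussian binomial coefficient (equal to $0$ if $k>m$). *)

theory Defs
  imports "HOL-Combinatorics.Permutations" "HOL-Computational_Algebra.Polynomial"
begin

text \<open>Permutations of [m] = {1..m}, represented as functions nat => nat permuting {1..m}.\<close>

definition involution :: "(nat \<Rightarrow> nat) \<Rightarrow> bool" where
  "involution p \<longleftrightarrow> p \<circ> p = id"

definition avoids321 :: "nat \<Rightarrow> (nat \<Rightarrow> nat) \<Rightarrow> bool" where
  "avoids321 m p \<longleftrightarrow>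
     \<not> (\<exists>i j k. 1 \<le> i \<and> i < j \<and> j < k \<and> k \<le> m \<and> p i > p j \<and> p j > p k)"

definition inv321 :: "nat \<Rightarrow> (nat \<Rightarrow> nat) set" where
  "inv321 m = {p. p permutes {1..m} \<and> involution p \<and> avoids321 m p}"

definition fp :: "nat \<Rightarrow> (nat \<Rightarrow> nat) \<Rightarrow> nat" where
  "fp m p = card {i \<in> {1..m}. p i = i}"

definition descents :: "nat \<Rightarrow> (nat \<Rightarrow> nat) \<Rightarrow> nat set" where
  "descents m p = {i. 1 \<le> i \<and> i < m \<and> p i > p (Suc i)}"

definition des :: "nat \<Rightarrow> (nat \<Rightarrow> nat) \<Rightarrow> nat" where
  "des m p = card (descents m p)"

definition maj :: "nat \<Rightarrow> (nat \<Rightarrow> nat) \<Rightarrow> nat" where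
  "maj m p = \<Sum> (descents m p)"

fun qbin :: "nat \<Rightarrow> nat \<Rightarrow> int poly" where
  "qbin m 0 = 1"
| "qbin 0 (Suc k) = 0"
| "qbin (Suc m) (Suc k) = qbin m k + monom 1 (Suc k) * qbin m (Suc k)"

definition qbinz :: "int \<Rightarrow> nat \<Rightarrow> int poly" where
  "qbinz m k = (if m < 0 then 0 else qbin (nat m) k)"

end

theory Submission
  imports Defs
begin

text \<open>
  A 321-avoiding involution \<open>p\<close> of a finite set \<open>S \<subseteq> \<nat>\<close> is determined by the set \<open>C\<close> of
  tops of its 2-cycles (the points with \<open>p i < i\<close>). This set is a ballot set: every initial
  segment of \<open>S\<close> contains at most as many points of \<open>C\<close> as of \<open>S - C\<close>. Conversely every ballot
  set arises, as one sees by peeling off the largest point of \<open>S\<close>: it is a fixed point if it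
  is not in \<open>C\<close>, and otherwise it is joined to the largest point outside \<open>C\<close>. Under this
  bijection \<open>p\<close> has \<open>|S| - 2|C|\<close> fixed points, and \<open>i\<close> is a descent of \<open>p\<close> exactly when
  \<open>i \<notin> C\<close> and \<open>i + 1 \<in> C\<close> (a rise of \<open>C\<close>).

  The rise-weighted generating function of ballot sets \<open>C \<subseteq> {1..n}\<close> with \<open>|C| \<le> a\<close> and \<open>k\<close>
  rises satisfies, by looking at whether \<open>n\<close> and \<open>n - 1\<close> lie in \<open>C\<close>, the same recurrence as
  \<open>q^(k^2) [a, k]_q [n - a, k]_q\<close> (a consequence of the two q-Pascal rules), which gives the first
  identity for \<open>n = a + b\<close>. The second is the difference of the cases \<open>|C| \<le> d\<close> and
  \<open>|C| \<le> d - 1\<close> with \<open>d = (n - \<ell>) / 2\<close>.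
\<close>

section \<open>Gaussian binomial coefficients\<close>

lemma qbin_eq_0: "m < k \<Longrightarrow> qbin m k = 0"
proof (induction m arbitrary: k)
  case 0 then show ?case by (cases k) auto
next
  case (Suc m) then show ?case by (cases k) auto
qed

lemma qbin_Suc_Suc':
  "qbin (Suc m) (Suc k) = monom 1 (m - k) * qbin m k + qbin m (Suc k)"
proof (induction m arbitrary: k)
  case 0
  then show ?case by (cases k) auto
next
  case (Suc m)
  show ?case
  proof (cases k)
    case 0
    have "qbin (Suc (Suc m)) 1 = 1 + monom 1 1 * (monom 1 m + qbin m 1)"
      using Suc.IH[of 0] by simp
    also have "\<dots> = monom 1 (Suc m) + (1 + monom 1 1 * qbin m 1)"
      by (simp add: algebra_simps mult_monom)
    finally show ?thesis using 0 by simp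
  next
    case (Suc j)
    have shift: "monom 1 (Suc k) * (monom 1 (m - k) * qbin m k)
               = monom 1 (Suc m - k) * (monom 1 k * qbin m k)"
    proof (cases "m < k")
      case True then show ?thesis by (simp add: qbin_eq_0)
    next
      case False
      then have "Suc k + (m - k) = (Suc m - k) + k" by simp
      then show ?thesis by (simp add: mult_monom flip: mult.assoc)
    qed
    have "qbin (Suc (Suc m)) (Suc k)
        = (monom 1 (m - j) * qbin m j + qbin m k)
          + monom 1 (Suc k) * (monom 1 (m - k) * qbin m k + qbin m (Suc k))"
      using Suc.IH[of j] Suc.IH[of k] \<open>k = Suc j\<close> by simp
    also have "\<dots> = monom 1 (Suc m - k) * (qbin m j + monom 1 k * qbin m k)
                    + (qbin m k + monom 1 (Suc k) * qbin m (Suc k))"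
      using shift \<open>k = Suc j\<close> by (simp add: algebra_simps)
    also have "\<dots> = monom 1 (Suc m - k) * qbin (Suc m) k + qbin (Suc m) (Suc k)"
      using \<open>k = Suc j\<close> by simp
    finally show ?thesis .
  qed
qed

lemma qbinz_of_nat: "qbinz (int m) k = qbin m k"
  by (simp add: qbinz_def)

lemma qbinz_Suc: "qbinz (int m + 1) k = qbin (Suc m) k"
  by (metis of_nat_Suc add.commute qbinz_of_nat)

lemma qbinz_minus_1: "qbinz (int m - 1) k = (if m = 0 then 0 else qbin (m - 1) k)"
  by (cases m) (simp_all add: qbinz_def)

definition ballot_gf :: "nat \<Rightarrow> nat \<Rightarrow> nat \<Rightarrow> int poly" where
  "ballot_gf a b k = monom 1 (k^2) * qbin a k * qbin b k"

lemma ballot_gf_commute: "ballot_gf a b k = ballot_gf b a k"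
  by (simp add: ballot_gf_def algebra_simps)

lemma ballot_gf_0_left: "ballot_gf 0 b k = (if k = 0 then 1 else 0)"
  by (cases k) (auto simp: ballot_gf_def)

lemma ballot_gf_diff_qbinz:
  "monom 1 (k^2) * (qbinz (int a) k * qbinz (int b) k - qbinz (int a - 1) k * qbinz (int b + 1) k)
   = ballot_gf a b k - (if a = 0 then 0 else ballot_gf (a - 1) (Suc b) k)"
  by (simp add: qbinz_of_nat qbinz_Suc qbinz_minus_1 ballot_gf_def right_diff_distrib mult.assoc)

lemma ballot_gf_Suc_Suc:
  "ballot_gf (Suc a) (Suc b) k
   = ballot_gf (Suc a) b k + ballot_gf a (Suc b) k - ballot_gf a b k
     + (if k = 0 then 0 else monom 1 (Suc (a + b)) * ballot_gf a b (k - 1))"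
proof (cases k)
  case 0 then show ?thesis by (simp add: ballot_gf_def)
next
  case (Suc j)
  define M X Y where "M = monom (1::int) (k^2)" and "X = monom (1::int) (a - j)"
    and "Y = monom (1::int) (b - j)"
  have XY: "M * X * Y * qbin a j * qbin b j
          = monom 1 (Suc (a + b)) * monom 1 (j^2) * qbin a j * qbin b j"
  proof (cases "a < j \<or> b < j")
    case True then show ?thesis by (auto simp: qbin_eq_0)
  next
    case False
    then have "k^2 + (a - j) + (b - j) = Suc (a + b) + j^2"
      using Suc by (simp add: power2_eq_square)
    then have "M * X * Y = monom 1 (Suc (a + b)) * monom 1 (j^2)"
      unfolding M_def X_def Y_def by (simp add: mult_monom)
    then show ?thesis by simp
  qed
  have "ballot_gf (Suc a) (Suc b) k = M * (X * qbin a j + qbin a k) * (Y * qbin b j + qbin b k)"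
    and "ballot_gf (Suc a) b k = M * (X * qbin a j + qbin a k) * qbin b k"
    and "ballot_gf a (Suc b) k = M * qbin a k * (Y * qbin b j + qbin b k)"
    and "ballot_gf a b k = M * qbin a k * qbin b k"
    unfolding ballot_gf_def M_def X_def Y_def using Suc qbin_Suc_Suc' by simp_all
  moreover have "monom 1 (Suc (a + b)) * ballot_gf a b (k - 1) = M * X * Y * qbin a j * qbin b j"
    unfolding XY ballot_gf_def using Suc by (simp add: algebra_simps)
  ultimately show ?thesis using Suc by (simp add: algebra_simps)
qed

section \<open>Ballot sets counted by rises\<close>

definition ballot :: "nat set \<Rightarrow> nat set \<Rightarrow> bool" where
  "ballot S C \<longleftrightarrow> C \<subseteq> S \<and> (\<forall>t. card (C \<inter> {..t}) \<le> card ((S - C) \<inter> {..t}))"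

definition rises :: "nat set \<Rightarrow> nat set" where
  "rises C = {i. 1 \<le> i \<and> i \<notin> C \<and> Suc i \<in> C}"

definition ballots :: "nat \<Rightarrow> nat \<Rightarrow> nat \<Rightarrow> nat set set" where
  "ballots n a k = {C. ballot {1..n} C \<and> card C \<le> a \<and> card (rises C) = k}"

definition rise_gf :: "nat \<Rightarrow> nat \<Rightarrow> nat \<Rightarrow> int poly" where
  "rise_gf n a k = (\<Sum>C \<in> ballots n a k. monom 1 (\<Sum>(rises C)))"

definition rise_gf_top :: "nat \<Rightarrow> nat \<Rightarrow> nat \<Rightarrow> int poly" where
  "rise_gf_top n a k = (\<Sum>C \<in> {C \<in> ballots n a k. n \<in> C}. monom 1 (\<Sum>(rises C)))"

lemma ballot_subset: "ballot S C \<Longrightarrow> C \<subseteq> S"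
  by (simp add: ballot_def)

lemma ballot_card_le:
  assumes "finite S" "ballot S C"
  shows "2 * card C \<le> card S"
proof -
  obtain t where t: "\<forall>x\<in>S. x \<le> t" using assms(1) finite_nat_set_iff_bounded_le by blast
  have CS: "C \<subseteq> S" using assms(2) by (simp add: ballot_def)
  have "C \<inter> {..t} = C" "(S - C) \<inter> {..t} = S - C" using CS t by auto
  then have "card C \<le> card (S - C)" using assms(2) by (metis ballot_def)
  moreover have "card (S - C) = card S - card C"
    using CS assms(1) by (simp add: card_Diff_subset finite_subset)
  moreover have "card C \<le> card S" using CS assms(1) by (simp add: card_mono)
  ultimately show ?thesis by simp
qed

lemma ballot_insert_greater:
  assumes "\<forall>x\<in>S. x < n" "n \<notin> C"
  shows "ballot (insert n S) C \<longleftrightarrow> ballot S C"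
proof
  assume b: "ballot (insert n S) C"
  have CS: "C \<subseteq> S" using b assms(2) by (auto simp: ballot_def)
  have "card (C \<inter> {..t}) \<le> card ((S - C) \<inter> {..t})" for t
  proof (cases "S = {}")
    case True then show ?thesis using CS by simp
  next
    case False
    then obtain m where "n = Suc m" using assms(1) by (metis all_not_in_conv less_imp_Suc_add)
    then have le_m: "x \<le> m" if "x \<in> S" for x using that assms(1) by fastforce
    define t' where "t' = min t m"
    have "card (C \<inter> {..t}) = card (C \<inter> {..t'})"
      using CS le_m unfolding t'_def by (intro arg_cong[where f = card]) fastforce
    also have "\<dots> \<le> card ((insert n S - C) \<inter> {..t'})" using b by (simp add: ballot_def)
    also have "(insert n S - C) \<inter> {..t'} = (S - C) \<inter> {..t'}"
      using \<open>n = Suc m\<close> unfolding t'_def by auto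
    also have "card \<dots> \<le> card ((S - C) \<inter> {..t})"
      by (rule card_mono) (auto simp: t'_def)
    finally show ?thesis .
  qed
  then show "ballot S C" using CS by (simp add: ballot_def)
next
  assume b: "ballot S C"
  have "card (C \<inter> {..t}) \<le> card ((insert n S - C) \<inter> {..t})" for t
  proof -
    have "card (C \<inter> {..t}) \<le> card ((S - C) \<inter> {..t})" using b by (simp add: ballot_def)
    also have "\<dots> \<le> card ((insert n S - C) \<inter> {..t})" by (rule card_mono) auto
    finally show ?thesis .
  qed
  then show "ballot (insert n S) C" using b by (auto simp: ballot_def)
qed

lemma ballot_insert_greater_insert:
  assumes "finite S" "\<forall>x\<in>S. x < n" "n \<notin> C"
  shows "ballot (insert n S) (insert n C) \<longleftrightarrow> ballot S C \<and> 2 * card C < card S"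
proof -
  have nS: "n \<notin> S" using assms(2) by blast
  have diff: "insert n S - insert n C = S - C" using nS by auto
  have card_diff: "card (S - C) = card S - card C" if "C \<subseteq> S"
    using that assms(1) by (simp add: card_Diff_subset finite_subset)
  have card_insert: "card (insert n C) = Suc (card C)" if "C \<subseteq> S"
    using that assms(1) nS by (subst card_insert_disjoint) (auto intro: finite_subset)
  have high: "C \<inter> {..t} = C" "(S - C) \<inter> {..t} = S - C"
    if "C \<subseteq> S" "n \<le> t" for t using that assms(2) by fastforce+
  show ?thesis
  proof
    assume b: "ballot (insert n S) (insert n C)"
    have CS: "C \<subseteq> S" using b assms(3) by (auto simp: ballot_def)
    have bound: "card (insert n C \<inter> {..t}) \<le> card ((S - C) \<inter> {..t})" for t
      using b diff by (simp add: ballot_def)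
    have "card (C \<inter> {..t}) \<le> card ((S - C) \<inter> {..t})" for t
      by (rule le_trans[OF card_mono bound]) auto
    moreover have "insert n C \<inter> {..n} = insert n C" using high(1)[OF CS] by auto
    then have "Suc (card C) \<le> card S - card C"
      using bound[of n] high(2)[OF CS] card_diff[OF CS] card_insert[OF CS] by simp
    ultimately show "ballot S C \<and> 2 * card C < card S" using CS by (simp add: ballot_def)
  next
    assume b: "ballot S C \<and> 2 * card C < card S"
    then have CS: "C \<subseteq> S" by (simp add: ballot_def)
    have "card (insert n C \<inter> {..t}) \<le> card ((S - C) \<inter> {..t})" for t
    proof (cases "t < n")
      case True
      then have "insert n C \<inter> {..t} = C \<inter> {..t}" by auto
      then show ?thesis using b by (simp add: ballot_def)
    next
      case False
      then have "insert n C \<inter> {..t} = insert n C" using high(1)[OF CS] by auto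
      then have "card (insert n C \<inter> {..t}) = Suc (card C)"
        and "card ((S - C) \<inter> {..t}) = card S - card C"
        using high(2)[OF CS] card_diff[OF CS] card_insert[OF CS] False by simp_all
      then show ?thesis using b by linarith
    qed
    then show "ballot (insert n S) (insert n C)" using CS diff by (auto simp: ballot_def)
  qed
qed

lemma ballot_Diff_Max:
  assumes "finite S" "ballot S C" "card C < card (S - C)"
  shows "Max (S - C) \<in> S - C" "ballot (S - {Max (S - C)}) C"
proof -
  define m where "m = Max (S - C)"
  have "S - C \<noteq> {}" using assms(3) by (metis card.empty not_less0)
  then have m: "m \<in> S - C" "\<And>x. x \<in> S - C \<Longrightarrow> x \<le> m"
    using assms(1) unfolding m_def by (metis Max_in finite_Diff, simp)
  have CS: "C \<subseteq> S" using assms(2) by (simp add: ballot_def)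
  have "card (C \<inter> {..t}) \<le> card ((S - {m} - C) \<inter> {..t})" for t
  proof (cases "t < m")
    case True
    then have "(S - {m} - C) \<inter> {..t} = (S - C) \<inter> {..t}" by auto
    then show ?thesis using assms(2) by (simp add: ballot_def)
  next
    case False
    then have "(S - {m} - C) \<inter> {..t} = (S - C) - {m}" using m by fastforce
    then have "card ((S - {m} - C) \<inter> {..t}) = card (S - C) - 1" using m(1) assms(1) by simp
    moreover have "card (C \<inter> {..t}) \<le> card C"
      using CS assms(1) by (intro card_mono) (auto intro: finite_subset)
    ultimately show ?thesis using assms(3) by linarith
  qed
  then show "ballot (S - {Max (S - C)}) C" using CS m(1) unfolding m_def by (auto simp: ballot_def)
  show "Max (S - C) \<in> S - C" using m(1) unfolding m_def .
qed

lemma ballot_atLeastAtMost_Suc_notin: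
  "ballot {1..Suc n} C \<and> Suc n \<notin> C \<longleftrightarrow> ballot {1..n} C"
proof -
  have "ballot {1..n} C \<Longrightarrow> Suc n \<notin> C" using ballot_subset by fastforce
  then show ?thesis
    using ballot_insert_greater[of "{1..n}" "Suc n" C] by (auto simp: atLeastAtMostSuc_conv)
qed

lemma ballot_atLeastAtMost_insert_Suc:
  "Suc n \<notin> C \<Longrightarrow> ballot {1..Suc n} (insert (Suc n) C) \<longleftrightarrow> ballot {1..n} C \<and> 2 * card C < n"
  using ballot_insert_greater_insert[of "{1..n}" "Suc n" C] by (simp add: atLeastAtMostSuc_conv)

lemma finite_ballots: "finite (ballots n a k)"
  by (rule finite_subset[of _ "Pow {1..n}"]) (auto simp: ballots_def ballot_def)

lemma rises_subset: "C \<subseteq> {1..n} \<Longrightarrow> rises C \<subseteq> {1..n}"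
  by (auto simp: rises_def)

lemma rises_insert_Suc_member:
  "C \<subseteq> {1..n} \<Longrightarrow> n \<in> C \<Longrightarrow> rises (insert (Suc n) C) = rises C"
  by (auto simp: rises_def)

lemma rises_insert_Suc_Suc:
  assumes "C \<subseteq> {1..m}"
  shows "rises (insert (Suc (Suc m)) C) = insert (Suc m) (rises C)" "Suc m \<notin> rises C"
  using assms by (auto simp: rises_def)

lemma rise_gf_0: "rise_gf n 0 k = (if k = 0 then 1 else 0)"
proof -
  have "ballots n 0 k = (if k = 0 then {{}} else {})"
    by (auto simp: ballots_def ballot_def rises_def dest: finite_subset[OF _ finite_atLeastAtMost])
  then show ?thesis by (simp add: rise_gf_def rises_def)
qed

lemma rise_gf_card_bound: "2 * a = Suc n \<Longrightarrow> rise_gf n a k = rise_gf n (a - 1) k"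
  using ballot_card_le[of "{1..n}"] unfolding rise_gf_def ballots_def
  by (intro arg_cong[where f = "sum _"]) fastforce

lemma rise_gf_Suc: "rise_gf (Suc n) a k = rise_gf n a k + rise_gf_top (Suc n) a k"
proof -
  have "rise_gf (Suc n) a k
      = (\<Sum>C \<in> {C \<in> ballots (Suc n) a k. Suc n \<notin> C}. monom 1 (\<Sum>(rises C)))
        + rise_gf_top (Suc n) a k"
    unfolding rise_gf_def rise_gf_top_def using finite_ballots[of "Suc n" a k]
    by (subst sum.union_disjoint[symmetric]) (auto intro: arg_cong[where f = "sum _"])
  moreover have "{C \<in> ballots (Suc n) a k. Suc n \<notin> C} = ballots n a k"
    using ballot_atLeastAtMost_Suc_notin unfolding ballots_def by blast
  ultimately show ?thesis by (simp add: rise_gf_def)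
qed

lemma rise_gf_top_Suc_eq:
  assumes "2 * a < n"
  shows "rise_gf_top (Suc n) (Suc a) k
       = (\<Sum>C | ballot {1..n} C \<and> card C \<le> a \<and> card (rises (insert (Suc n) C)) = k.
            monom 1 (\<Sum>(rises (insert (Suc n) C))))"
proof -
  define T where "T = {C. ballot {1..n} C \<and> card C \<le> a \<and> card (rises (insert (Suc n) C)) = k}"
  have notin: "Suc n \<notin> C" if "ballot {1..n} C" for C using ballot_subset[OF that] by auto
  have card: "card (insert (Suc n) C) = Suc (card C)" if "ballot {1..n} C" for C
    using ballot_subset[OF that] notin[OF that] by (simp add: finite_subset)
  have "{C \<in> ballots (Suc n) (Suc a) k. Suc n \<in> C} = insert (Suc n) ` T"
  proof (intro set_eqI iffI)
    fix C assume C: "C \<in> {C \<in> ballots (Suc n) (Suc a) k. Suc n \<in> C}"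
    define C0 where "C0 = C - {Suc n}"
    have C_eq: "C = insert (Suc n) C0" using C unfolding C0_def by auto
    then have "ballot {1..n} C0"
      using C ballot_atLeastAtMost_insert_Suc[of n C0] by (simp add: ballots_def C0_def)
    then show "C \<in> insert (Suc n) ` T"
      using C C_eq card unfolding T_def ballots_def by auto
  next
    fix C assume "C \<in> insert (Suc n) ` T"
    then obtain C0 where C0: "C = insert (Suc n) C0" "ballot {1..n} C0" "card C0 \<le> a"
        "card (rises (insert (Suc n) C0)) = k"
      unfolding T_def by auto
    then show "C \<in> {C \<in> ballots (Suc n) (Suc a) k. Suc n \<in> C}"
      using assms ballot_atLeastAtMost_insert_Suc[OF notin] card by (auto simp: ballots_def)
  qed
  moreover have "inj_on (insert (Suc n)) T"
    using notin unfolding T_def by (intro inj_onI) (metis insert_ident mem_Collect_eq)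
  ultimately show ?thesis unfolding rise_gf_top_def T_def by (simp add: sum.reindex)
qed

lemma sum_ballots_insert_Suc_Suc:
  "(\<Sum>C | ballot {1..m} C \<and> card C \<le> a \<and> card (rises (insert (Suc (Suc m)) C)) = k.
      monom 1 (\<Sum>(rises (insert (Suc (Suc m)) C))))
   = (if k = 0 then 0 else monom 1 (Suc m) * rise_gf m a (k - 1))"
proof -
  have rises: "rises (insert (Suc (Suc m)) C) = insert (Suc m) (rises C)" "Suc m \<notin> rises C"
    "finite (rises C)" if "ballot {1..m} C" for C
    using rises_insert_Suc_Suc[OF ballot_subset[OF that]]
      finite_subset[OF rises_subset[OF ballot_subset[OF that]]] by simp_all
  show ?thesis
  proof (cases k)
    case 0
    then have "{C. ballot {1..m} C \<and> card C \<le> a \<and> card (rises (insert (Suc (Suc m)) C)) = k} = {}"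
      using rises by auto
    then show ?thesis using 0 by (simp only: sum.empty) simp
  next
    case (Suc j)
    then have "{C. ballot {1..m} C \<and> card C \<le> a \<and> card (rises (insert (Suc (Suc m)) C)) = k}
             = ballots m a j"
      using rises by (auto simp: ballots_def)
    moreover have "monom (1::int) (\<Sum>(rises (insert (Suc (Suc m)) C)))
                 = monom 1 (Suc m) * monom 1 (\<Sum>(rises C))" if "C \<in> ballots m a j" for C
      using that rises[of C] by (simp add: ballots_def mult_monom)
    ultimately show ?thesis using Suc by (simp add: rise_gf_def sum_distrib_left cong: sum.cong)
  qed
qed

lemma rise_gf_top_Suc_Suc:
  assumes "2 * a \<le> m"
  shows "rise_gf_top (Suc (Suc m)) (Suc a) k
       = rise_gf_top (Suc m) a k + (if k = 0 then 0 else monom 1 (Suc m) * rise_gf m a (k - 1))"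
proof -
  define n where "n = Suc m"
  define w where "w C = monom (1::int) (\<Sum>(rises C))" for C
  define T where "T = {C. ballot {1..n} C \<and> card C \<le> a \<and> card (rises (insert (Suc n) C)) = k}"
  have fin: "finite T"
    by (rule finite_subset[of _ "Pow {1..n}"]) (auto simp: T_def ballot_def)
  have "rise_gf_top (Suc n) (Suc a) k = sum (w \<circ> insert (Suc n)) T"
    using rise_gf_top_Suc_eq[of a n k] assms unfolding n_def T_def w_def by simp
  also have "\<dots> = sum (w \<circ> insert (Suc n)) {C \<in> T. n \<in> C} + sum (w \<circ> insert (Suc n)) {C \<in> T. n \<notin> C}"
    using fin by (subst sum.union_disjoint[symmetric]) (auto intro: arg_cong[where f = "sum _"])
  also have "sum (w \<circ> insert (Suc n)) {C \<in> T. n \<in> C} = rise_gf_top n a k"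
  proof -
    have "rises (insert (Suc n) C) = rises C" if "ballot {1..n} C" "n \<in> C" for C
      using rises_insert_Suc_member[OF ballot_subset[OF that(1)] that(2)] .
    then show ?thesis unfolding rise_gf_top_def T_def ballots_def w_def
      by (intro sum.cong) auto
  qed
  also have "sum (w \<circ> insert (Suc n)) {C \<in> T. n \<notin> C}
           = (if k = 0 then 0 else monom 1 n * rise_gf m a (k - 1))"
  proof -
    have "{C \<in> T. n \<notin> C}
        = {C. ballot {1..m} C \<and> card C \<le> a \<and> card (rises (insert (Suc n) C)) = k}"
      using ballot_atLeastAtMost_Suc_notin unfolding T_def n_def by blast
    then show ?thesis using sum_ballots_insert_Suc_Suc[of m a k] unfolding n_def w_def by simp
  qed
  finally show ?thesis unfolding n_def .
qed

lemma rise_gf_Suc_Suc: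
  assumes "2 * a \<le> m"
  shows "rise_gf (Suc (Suc m)) (Suc a) k
       = rise_gf (Suc m) (Suc a) k + rise_gf (Suc m) a k - rise_gf m a k
         + (if k = 0 then 0 else monom 1 (Suc m) * rise_gf m a (k - 1))"
  using rise_gf_Suc[of "Suc m" "Suc a" k] rise_gf_Suc[of m a k] rise_gf_top_Suc_Suc[OF assms, of k]
  by simp

lemma rise_gf_eq_ballot_gf: "2 * a \<le> n \<Longrightarrow> rise_gf n a k = ballot_gf a (n - a) k"
proof (induction n arbitrary: a k rule: less_induct)
  case (less n)
  show ?case
  proof (cases a)
    case 0
    then show ?thesis by (simp add: rise_gf_0 ballot_gf_0_left)
  next
    case (Suc a')
    then have "2 \<le> n" using less.prems by simp
    then obtain m where "n = 2 + m" using le_iff_add by blast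
    then have n: "n = Suc (Suc m)" and am: "2 * a' \<le> m" using less.prems Suc by simp_all
    obtain b where m: "m = a' + b" using le_iff_add le_trans[OF _ am] by (metis mult_2 le_add1)
    have IH: "rise_gf n' a'' k' = ballot_gf a'' (n' - a'') k'" if "n' < n" "2 * a'' \<le> n'"
      for n' a'' k' using less.IH that by blast
    have lower: "rise_gf m a' k' = ballot_gf a' b k'" for k'
      using IH[of m a' k'] am n m by simp
    have middle: "rise_gf (Suc m) a' k = ballot_gf a' (Suc b) k"
      using IH[of "Suc m" a' k] am n m by simp
    have upper: "rise_gf (Suc m) (Suc a') k = ballot_gf (Suc a') b k"
    proof (cases "2 * Suc a' \<le> Suc m")
      case True
      then show ?thesis using IH[of "Suc m" "Suc a'" k] n m by simp
    next
      case False
      then have "2 * Suc a' = Suc (Suc m)" and "b = a'" using am m by simp_all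
      then show ?thesis
        using rise_gf_card_bound[of "Suc a'" "Suc m" k] middle ballot_gf_commute by simp
    qed
    show ?thesis
      using rise_gf_Suc_Suc[OF am, of k] ballot_gf_Suc_Suc[of a' b k] lower middle upper
      unfolding n Suc m by simp
  qed
qed

section \<open>321-avoiding involutions and ballot sets\<close>

definition inv321_on :: "nat set \<Rightarrow> (nat \<Rightarrow> nat) \<Rightarrow> bool" where
  "inv321_on S p \<longleftrightarrow> (\<forall>x. p (p x) = x) \<and> (\<forall>x. x \<notin> S \<longrightarrow> p x = x)
     \<and> \<not> (\<exists>i\<in>S. \<exists>j\<in>S. \<exists>k\<in>S. i < j \<and> j < k \<and> p j < p i \<and> p k < p j)"

definition cycle_tops :: "nat set \<Rightarrow> (nat \<Rightarrow> nat) \<Rightarrow> nat set" where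
  "cycle_tops S p = {i \<in> S. p i < i}"

lemma inv321_onI:
  assumes "\<And>x. p (p x) = x" "\<And>x. x \<notin> S \<Longrightarrow> p x = x"
    and "\<And>i j k. i \<in> S \<Longrightarrow> j \<in> S \<Longrightarrow> k \<in> S \<Longrightarrow> i < j \<Longrightarrow> j < k \<Longrightarrow> p j < p i \<Longrightarrow> p k < p j
           \<Longrightarrow> False"
  shows "inv321_on S p"
  using assms unfolding inv321_on_def by blast

context
  fixes S p assumes p: "inv321_on S p"
begin

lemma inv321_on_involution: "p (p x) = x"
  using p by (simp add: inv321_on_def)

lemma inv321_on_outside: "x \<notin> S \<Longrightarrow> p x = x"
  using p by (simp add: inv321_on_def)

lemma inv321_on_closed: "x \<in> S \<Longrightarrow> p x \<in> S"
  by (metis inv321_on_involution inv321_on_outside)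

lemma inv321_on_inj: "p x = p y \<Longrightarrow> x = y"
  by (metis inv321_on_involution)

lemma inv321_on_no_321:
  "i \<in> S \<Longrightarrow> j \<in> S \<Longrightarrow> k \<in> S \<Longrightarrow> i < j \<Longrightarrow> j < k \<Longrightarrow> p j < p i \<Longrightarrow> p k < p j \<Longrightarrow> False"
  using p unfolding inv321_on_def by blast

end

lemma inv321_eq_inv321_on: "inv321 n = {p. inv321_on {1..n} p}"
proof (intro set_eqI iffI)
  fix p assume "p \<in> inv321 n"
  then have p: "p permutes {1..n}" "p \<circ> p = id" "avoids321 n p"
    by (auto simp: inv321_def involution_def)
  show "p \<in> {p. inv321_on {1..n} p}"
  proof (intro CollectI inv321_onI)
    show "p (p x) = x" for x using fun_cong[OF p(2), of x] by simp
    show "p x = x" if "x \<notin> {1..n}" for x using permutes_not_in[OF p(1) that] .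
  qed (use p(3) in \<open>auto simp: avoids321_def\<close>)
next
  fix p assume "p \<in> {p. inv321_on {1..n} p}"
  then have p: "inv321_on {1..n} p" by simp
  have "p permutes {1..n}"
    unfolding permutes_def using inv321_on_outside[OF p] inv321_on_involution[OF p] by metis
  moreover have "p \<circ> p = id" using inv321_on_involution[OF p] by (auto simp: fun_eq_iff)
  moreover have "avoids321 n p"
    unfolding avoids321_def using inv321_on_no_321[OF p] by fastforce
  ultimately show "p \<in> inv321 n" by (simp add: inv321_def involution_def)
qed

lemma card_fixed_points_cycle_tops:
  assumes "finite S" "\<And>x. p (p x) = x" "\<And>x. x \<in> S \<Longrightarrow> p x \<in> S"
  shows "card {i \<in> S. p i = i} + 2 * card (cycle_tops S p) = card S"
proof -
  define F B where "F = {i \<in> S. p i = i}" and "B = {i \<in> S. i < p i}"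
  have "B = p ` cycle_tops S p"
    unfolding B_def cycle_tops_def using assms(2,3) by (auto intro: image_eqI[of _ p "p _"])
  then have card_B: "card B = card (cycle_tops S p)"
    using assms(2) by (metis card_image inj_on_inverseI)
  have S_eq: "F \<union> cycle_tops S p \<union> B = S" unfolding F_def B_def cycle_tops_def by auto
  have "finite F" "finite B" "finite (cycle_tops S p)"
    using assms(1) by (simp_all add: F_def B_def cycle_tops_def)
  moreover have "F \<inter> cycle_tops S p = {}" "(F \<union> cycle_tops S p) \<inter> B = {}"
    unfolding F_def B_def cycle_tops_def by auto
  ultimately have "card (F \<union> cycle_tops S p \<union> B) = card F + card (cycle_tops S p) + card B"
    by (simp add: card_Un_disjoint)
  then have "card S = card F + 2 * card (cycle_tops S p)" unfolding S_eq card_B by simp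
  then show ?thesis unfolding F_def by simp
qed

lemma fp_eq_card_cycle_tops:
  assumes "inv321_on {1..n} p"
  shows "fp n p = n - 2 * card (cycle_tops {1..n} p)"
  using card_fixed_points_cycle_tops[of "{1..n}" p] inv321_on_involution[OF assms]
    inv321_on_closed[OF assms] unfolding fp_def by fastforce

lemma descents_eq_rises_cycle_tops:
  assumes p: "inv321_on {1..n} p"
  shows "descents n p = rises (cycle_tops {1..n} p)"
proof (intro set_eqI iffI)
  fix i assume "i \<in> descents n p"
  then have i: "1 \<le> i" "i < n" "p (Suc i) < p i" by (auto simp: descents_def)
  have iS: "i \<in> {1..n}" and i1S: "Suc i \<in> {1..n}" using i by auto
  have "i \<le> p i"
  proof (rule ccontr)
    assume "\<not> i \<le> p i"
    then show False
      using inv321_on_no_321[OF p inv321_on_closed[OF p i1S] inv321_on_closed[OF p iS] iS]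
        i(3) inv321_on_involution[OF p, of i] inv321_on_involution[OF p, of "Suc i"] by simp
  qed
  moreover have "p (Suc i) < Suc i"
  proof (rule ccontr)
    assume "\<not> p (Suc i) < Suc i"
    then consider "p (Suc i) = Suc i" | "Suc i < p (Suc i)" by linarith
    then show False
    proof cases
      case 1
      then show False using inv321_on_no_321[OF p iS i1S inv321_on_closed[OF p iS]]
          i(3) inv321_on_involution[OF p, of i] by simp
    next
      case 2
      then show False using inv321_on_no_321[OF p iS i1S inv321_on_closed[OF p i1S]]
          i(3) inv321_on_involution[OF p, of "Suc i"] by simp
    qed
  qed
  ultimately show "i \<in> rises (cycle_tops {1..n} p)"
    using i iS i1S by (auto simp: rises_def cycle_tops_def)
next
  fix i assume "i \<in> rises (cycle_tops {1..n} p)"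
  then have i: "1 \<le> i" "\<not> (i \<in> {1..n} \<and> p i < i)" "Suc i \<in> {1..n}" "p (Suc i) < Suc i"
    by (auto simp: rises_def cycle_tops_def)
  then have "p (Suc i) < p i" using inv321_on_inj[OF p, of i "Suc i"] by fastforce
  then show "i \<in> descents n p" using i by (auto simp: descents_def)
qed

lemma ballot_cycle_tops:
  assumes "\<And>x. p (p x) = x" "\<And>x. x \<in> S \<Longrightarrow> p x \<in> S"
  shows "ballot S (cycle_tops S p)"
proof -
  let ?C = "cycle_tops S p"
  have "card (?C \<inter> {..t}) \<le> card ((S - ?C) \<inter> {..t})" for t
  proof -
    have "p ` (?C \<inter> {..t}) \<subseteq> (S - ?C) \<inter> {..t}"
      using assms by (fastforce simp: cycle_tops_def)
    moreover have "inj_on p (?C \<inter> {..t})" by (metis assms(1) inj_on_inverseI)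
    ultimately show ?thesis by (metis card_image card_mono finite_Int finite_atMost)
  qed
  then show ?thesis by (auto simp: ballot_def cycle_tops_def)
qed

text \<open>A non-top strictly between \<open>p (Max S)\<close> and \<open>Max S\<close> would complete a 321 pattern.\<close>

lemma inv321_on_Max_top:
  assumes S: "finite S" and p: "inv321_on S p" and top: "Max S \<in> cycle_tops S p"
  shows "p (Max S) = Max (S - cycle_tops S p)"
proof -
  define n m where "n = Max S" and "m = p n"
  have nS: "n \<in> S" and mn: "m < n" using top by (simp_all add: n_def m_def cycle_tops_def)
  have pm: "p m = n" using inv321_on_involution[OF p] m_def by simp
  have mS: "m \<in> S" using inv321_on_closed[OF p nS] m_def by simp
  have m_nontop: "m \<in> S - cycle_tops S p" using mS pm mn by (auto simp: cycle_tops_def)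
  have "x \<le> m" if x: "x \<in> S - cycle_tops S p" for x
  proof (rule ccontr)
    assume "\<not> x \<le> m"
    then have xm: "m < x" by simp
    have xS: "x \<in> S" and px: "x \<le> p x" using x by (auto simp: cycle_tops_def)
    have xn: "x < n" using x top S Max_ge[OF S xS] unfolding n_def by (metis DiffE le_neq_implies_less)
    show False
    proof (cases "p x = x")
      case True
      then show False using inv321_on_no_321[OF p mS xS nS xm xn] pm m_def xm xn by simp
    next
      case False
      then have "x < p x" using px by simp
      moreover have "p x < n"
        using inv321_on_closed[OF p xS] Max_ge[OF S] inv321_on_inj[OF p, of x m] pm xm
        unfolding n_def by fastforce
      ultimately show False
        using inv321_on_no_321[OF p mS xS inv321_on_closed[OF p xS] xm] pm
          inv321_on_involution[OF p, of x] by simp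
    qed
  qed
  then show ?thesis unfolding n_def[symmetric] m_def[symmetric]
    by (intro Max_eqI[symmetric]) (use S m_nontop in auto)
qed

lemma inv321_on_Max_not_top:
  assumes "finite S" "S \<noteq> {}" "inv321_on S p" "Max S \<notin> cycle_tops S p"
  shows "p (Max S) = Max S"
  using assms Max_ge[OF assms(1) inv321_on_closed[OF assms(3) Max_in[OF assms(1,2)]]]
  by (auto simp: cycle_tops_def)

lemma inv321_on_remove_fixed:
  assumes "inv321_on S p" "p n = n"
  shows "inv321_on (S - {n}) p" "cycle_tops (S - {n}) p = cycle_tops S p"
  using assms unfolding inv321_on_def cycle_tops_def by auto

lemma inv321_on_remove_cycle:
  assumes p: "inv321_on S p" and "p n = m" "m \<noteq> n"
  shows "inv321_on (S - {m, n}) (p(m := m, n := n))"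
    and "cycle_tops (S - {m, n}) (p(m := m, n := n)) = cycle_tops S p - {m, n}"
proof (rule inv321_onI)
  have pm: "p m = n" using assms inv321_on_involution by blast
  show "(p(m := m, n := n)) ((p(m := m, n := n)) x) = x" for x
  proof (cases "x = m \<or> x = n")
    case False
    then have "p x \<noteq> m" "p x \<noteq> n" using assms pm inv321_on_inj[OF p] by metis+
    then show ?thesis using False inv321_on_involution[OF p] by simp
  qed (use assms in auto)
qed (use inv321_on_outside[OF p] inv321_on_no_321[OF p] in \<open>auto simp: cycle_tops_def\<close>)

lemma cycle_tops_inj:
  "finite S \<Longrightarrow> inv321_on S p \<Longrightarrow> inv321_on S p' \<Longrightarrow> cycle_tops S p = cycle_tops S p' \<Longrightarrow> p = p'"
proof (induction "card S" arbitrary: S p p' rule: less_induct)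
  case less
  note S = less.prems(1) and p = less.prems(2) and p' = less.prems(3) and tops = less.prems(4)
  show ?case
  proof (cases "S = {}")
    case True
    then show ?thesis using inv321_on_outside[OF p] inv321_on_outside[OF p'] by auto
  next
    case False
    define n where "n = Max S"
    have nS: "n \<in> S" using False S n_def by simp
    show ?thesis
    proof (cases "n \<in> cycle_tops S p")
      case False
      then have "p n = n" "p' n = n"
        using inv321_on_Max_not_top[OF S \<open>S \<noteq> {}\<close>] p p' tops unfolding n_def by auto
      moreover have "card (S - {n}) < card S" using S nS by (rule card_Diff1_less)
      ultimately show ?thesis
        using less.hyps[of "S - {n}" p p'] inv321_on_remove_fixed[OF p] inv321_on_remove_fixed[OF p']
          S tops by simp
    next
      case True
      define m where "m = p n"
      have m': "p' n = m"
        using inv321_on_Max_top[OF S p] inv321_on_Max_top[OF S p'] True tops m_def n_def by simp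
      have mn: "m \<noteq> n" using True m_def by (simp add: cycle_tops_def)
      have "card (S - {m, n}) < card S"
        using nS inv321_on_closed[OF p nS] S unfolding m_def by (intro psubset_card_mono) auto
      then have e: "p(m := m, n := n) = p'(m := m, n := n)"
        using less.hyps[of "S - {m, n}"] S inv321_on_remove_cycle[OF p m_def[symmetric] mn]
          inv321_on_remove_cycle[OF p' m' mn] tops by simp
      show ?thesis
      proof
        fix x
        show "p x = p' x"
          using fun_cong[OF e, of x] m_def m' inv321_on_involution[OF p, of n]
            inv321_on_involution[OF p', of n] by (auto split: if_splits)
      qed
    qed
  qed
qed

lemma inv321_on_insert_fixed:
  assumes p: "inv321_on S p" and below: "\<forall>x\<in>S. x < n"
  shows "inv321_on (insert n S) p" "cycle_tops (insert n S) p = cycle_tops S p"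
proof -
  have pn: "p n = n" using inv321_on_outside[OF p] below by blast
  show "inv321_on (insert n S) p"
  proof (rule inv321_onI)
    fix i j k assume ijk: "i \<in> insert n S" "j \<in> insert n S" "k \<in> insert n S"
      "i < j" "j < k" "p j < p i" "p k < p j"
    have "j \<in> S" "i \<in> S" using ijk below by fastforce+
    show False
    proof (cases "k = n")
      case True
      then show False using ijk(7) pn below inv321_on_closed[OF p \<open>j \<in> S\<close>] by fastforce
    next
      case False
      then show False using ijk \<open>j \<in> S\<close> \<open>i \<in> S\<close> inv321_on_no_321[OF p] by blast
    qed
  qed (use inv321_on_involution[OF p] inv321_on_outside[OF p] in auto)
  show "cycle_tops (insert n S) p = cycle_tops S p" using pn by (auto simp: cycle_tops_def)
qed

lemma involution_swap_fixed_points: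
  assumes "\<And>x. p (p x) = x" "p m = m" "p n = n"
  shows "(p(m := n, n := m)) ((p(m := n, n := m)) x) = x"
proof (cases "x = m \<or> x = n")
  case False
  then have "p x \<noteq> m" "p x \<noteq> n" using assms by metis+
  then show ?thesis using False assms(1) by simp
qed (use assms in auto)

lemma inv321_on_insert_cycle:
  assumes p: "inv321_on S p" and mn: "m < n" and below: "\<forall>x\<in>S. x < n" and mS: "m \<notin> S"
    and tops: "\<And>x. x \<in> S \<Longrightarrow> m < x \<Longrightarrow> p x < x"
  shows "inv321_on (insert m (insert n S)) (p(m := n, n := m))" (is "inv321_on ?S ?q")
    and "cycle_tops (insert m (insert n S)) (p(m := n, n := m)) = insert n (cycle_tops S p)"
proof -
  have nS: "n \<notin> S" using below by auto
  have q_S: "?q x = p x" if "x \<in> S" for x using that mS nS by auto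
  have pS: "p x \<in> S" if "x \<in> S" for x using inv321_on_closed[OF p that] .
  have q_le: "?q x \<le> n" if "x \<in> ?S" for x using that mn q_S pS below by fastforce
  show "inv321_on ?S ?q"
  proof (rule inv321_onI)
    show "?q (?q x) = x" for x
      by (rule involution_swap_fixed_points)
        (use inv321_on_involution[OF p] inv321_on_outside[OF p] mS nS in auto)
    show "?q x = x" if "x \<notin> ?S" for x using that inv321_on_outside[OF p] by auto
  next
    fix i j k assume ijk: "i \<in> ?S" "j \<in> ?S" "k \<in> ?S" "i < j" "j < k" "?q j < ?q i" "?q k < ?q j"
    have "j \<noteq> m" using ijk(6) q_le[OF ijk(1)] mn by auto
    have "j \<noteq> n" using ijk(3,5) below mn by auto
    have "k \<noteq> m" using ijk(7) q_le[OF ijk(2)] mn by auto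
    have jS: "j \<in> S" using ijk(2) \<open>j \<noteq> m\<close> \<open>j \<noteq> n\<close> by auto
    consider "k = n" | "k \<in> S" using ijk(3) \<open>k \<noteq> m\<close> by auto
    then show False
    proof cases
      case 1
      then have "m < p j" using ijk(7) q_S[OF jS] by simp
      have "j < m"
      proof (rule ccontr)
        assume "\<not> j < m"
        then have "p j < j" using tops[OF jS] \<open>j \<noteq> m\<close> by simp
        moreover have "p (p j) < p j" using tops[OF pS[OF jS] \<open>m < p j\<close>] .
        ultimately show False using inv321_on_involution[OF p] by simp
      qed
      then have iS: "i \<in> S" using ijk(1,4) mn by auto
      show False
        using inv321_on_no_321[OF p iS jS pS[OF jS] ijk(4)] \<open>j < m\<close> \<open>m < p j\<close> ijk(6)
          q_S[OF iS] q_S[OF jS] inv321_on_involution[OF p, of j] by simp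
    next
      case 2
      consider "i = m" | "i \<in> S" using ijk(1,4,5) below 2 by fastforce
      then show False
      proof cases
        case 1
        then have "p j < j" "p k < k" using tops jS 2 ijk(4,5) by auto
        moreover have "p k < p j" using ijk(7) q_S jS 2 by simp
        ultimately show False
          using inv321_on_no_321[OF p pS[OF 2] pS[OF jS] jS] inv321_on_involution[OF p, of j]
            inv321_on_involution[OF p, of k] ijk(5) by simp
      next
        case 2
        then show False
          using inv321_on_no_321[OF p 2 jS \<open>k \<in> S\<close> ijk(4,5)] ijk(6,7) q_S 2 jS \<open>k \<in> S\<close> by simp
      qed
    qed
  qed
  show "cycle_tops ?S ?q = insert n (cycle_tops S p)"
    using mn mS nS q_S by (auto simp: cycle_tops_def)
qed

lemma cycle_tops_surj:
  "finite S \<Longrightarrow> ballot S C \<Longrightarrow> \<exists>p. inv321_on S p \<and> cycle_tops S p = C"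
proof (induction "card S" arbitrary: S C rule: less_induct)
  case less
  note S = less.prems(1) and b = less.prems(2)
  show ?case
  proof (cases "S = {}")
    case True
    then have "C = {}" "inv321_on S id" using ballot_subset[OF b] by (auto simp: inv321_on_def)
    then show ?thesis by (auto simp: cycle_tops_def)
  next
    case False
    define n S1 where "n = Max S" and "S1 = S - {n}"
    have nS: "n \<in> S" using False S by (simp add: n_def)
    then have S_eq: "S = insert n S1" by (auto simp: S1_def)
    have below: "\<forall>x\<in>S1. x < n" and fin: "finite S1"
      using Max_ge[OF S] S by (auto simp: n_def S1_def order.strict_iff_order)
    have card_S1: "card S1 < card S" using S nS unfolding S1_def by (rule card_Diff1_less)
    show ?thesis
    proof (cases "n \<in> C")
      case False
      then have "ballot S1 C" using b ballot_insert_greater[OF below] S_eq by simp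
      then obtain p where p: "inv321_on S1 p" "cycle_tops S1 p = C"
        using less.hyps[OF card_S1 fin] by blast
      then show ?thesis using inv321_on_insert_fixed[OF p(1) below] S_eq by auto
    next
      case True
      define C1 where "C1 = C - {n}"
      have C_eq: "C = insert n C1" and nC1: "n \<notin> C1" using True by (auto simp: C1_def)
      have b1: "ballot S1 C1" and "2 * card C1 < card S1"
        using b ballot_insert_greater_insert[OF fin below nC1] S_eq C_eq by simp_all
      then have fewer: "card C1 < card (S1 - C1)"
        using fin ballot_subset[OF b1] by (simp add: card_Diff_subset finite_subset)
      define m where "m = Max (S1 - C1)"
      have m: "m \<in> S1 - C1" and "ballot (S1 - {m}) C1"
        using ballot_Diff_Max[OF fin b1 fewer] unfolding m_def by simp_all
      moreover have "card (S1 - {m}) < card S" using card_S1 m fin by (simp add: card_Diff1_less)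
      ultimately obtain p where p: "inv321_on (S1 - {m}) p" "cycle_tops (S1 - {m}) p = C1"
        using less.hyps[of "S1 - {m}"] fin by blast
      have tops: "p x < x" if "x \<in> S1 - {m}" "m < x" for x
        using that Max_ge[of "S1 - C1" x] fin p(2) unfolding m_def by (fastforce simp: cycle_tops_def)
      have "m < n" "\<forall>x\<in>S1 - {m}. x < n" "m \<notin> S1 - {m}" using m below by auto
      note cycle = inv321_on_insert_cycle[OF p(1) this tops]
      have "insert m (insert n (S1 - {m})) = S" using S_eq m by auto
      then show ?thesis using cycle p(2) C_eq by auto
    qed
  qed
qed

lemma bij_betw_cycle_tops: "bij_betw (cycle_tops {1..n}) (inv321 n) {C. ballot {1..n} C}"
proof (rule bij_betw_imageI)
  show "inj_on (cycle_tops {1..n}) (inv321 n)"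
    using cycle_tops_inj[of "{1..n}"] by (auto simp: inv321_eq_inv321_on intro: inj_onI)
  show "cycle_tops {1..n} ` inv321 n = {C. ballot {1..n} C}"
  proof (intro equalityI subsetI)
    fix C assume "C \<in> cycle_tops {1..n} ` inv321 n"
    then obtain p where p: "inv321_on {1..n} p" and "C = cycle_tops {1..n} p"
      by (auto simp: inv321_eq_inv321_on)
    then show "C \<in> {C. ballot {1..n} C}"
      using ballot_cycle_tops[OF inv321_on_involution[OF p] inv321_on_closed[OF p]] by simp
  next
    fix C assume "C \<in> {C. ballot {1..n} C}"
    then show "C \<in> cycle_tops {1..n} ` inv321 n"
      using cycle_tops_surj[of "{1..n}" C] by (auto simp: inv321_eq_inv321_on)
  qed
qed

section \<open>The generating functions\<close>

lemma sum_inv321_eq_sum_ballots: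
  "(\<Sum>p \<in> {p \<in> inv321 n. R (fp n p) (des n p)}. monom (1::int) (maj n p))
   = (\<Sum>C | ballot {1..n} C \<and> R (n - 2 * card C) (card (rises C)). monom 1 (\<Sum>(rises C)))"
proof -
  have stats: "fp n p = n - 2 * card (cycle_tops {1..n} p)"
    "descents n p = rises (cycle_tops {1..n} p)" if "p \<in> inv321 n" for p
    using fp_eq_card_cycle_tops descents_eq_rises_cycle_tops that by (auto simp: inv321_eq_inv321_on)
  have "bij_betw (cycle_tops {1..n}) {p \<in> inv321 n. R (fp n p) (des n p)}
      {C \<in> {C. ballot {1..n} C}. R (n - 2 * card C) (card (rises C))}"
    by (rule bij_betw_Collect[OF bij_betw_cycle_tops]) (simp add: stats des_def)
  then show ?thesis
    by (subst sum.reindex_bij_betw[symmetric]) (auto simp: stats maj_def intro: sum.cong)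
qed

lemma sum_inv321_fp_ge:
  assumes "a \<le> b"
  shows "(\<Sum>p \<in> {p \<in> inv321 (a + b). fp (a + b) p \<ge> b - a \<and> des (a + b) p = k}.
            monom (1::int) (maj (a + b) p)) = ballot_gf a b k"
proof -
  have "{C. ballot {1..a + b} C \<and> b - a \<le> a + b - 2 * card C \<and> card (rises C) = k}
      = ballots (a + b) a k"
    using ballot_card_le[of "{1..a + b}"] assms by (fastforce simp: ballots_def)
  then show ?thesis
    using sum_inv321_eq_sum_ballots[where R = "\<lambda>f d. b - a \<le> f \<and> d = k"]
      rise_gf_eq_ballot_gf[of a "a + b" k] assms by (simp add: rise_gf_def)
qed

lemma sum_inv321_fp_eq:
  assumes "l \<le> n" "l mod 2 = n mod 2"
  shows "(\<Sum>p \<in> {p \<in> inv321 n. fp n p = l \<and> des n p = k}. monom (1::int) (maj n p))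
       = monom 1 (k^2) *
         (qbinz (int ((n - l) div 2)) k * qbinz (int ((n + l) div 2)) k
          - qbinz (int ((n - l) div 2) - 1) k * qbinz (int ((n + l) div 2) + 1) k)"
proof -
  define d where "d = (n - l) div 2"
  have "2 dvd n - l" using mod_eq_dvd_iff_nat[OF assms(1), of 2] assms(2) by argo
  then have d2: "2 * d = n - l" unfolding d_def by simp
  have "n + l = 2 * (n - d)" using d2 assms(1) by linarith
  then have upper: "(n + l) div 2 = n - d" by simp
  have card_d: "{C. ballot {1..n} C \<and> n - 2 * card C = l \<and> card (rises C) = k}
      = {C. ballot {1..n} C \<and> card C = d \<and> card (rises C) = k}"
    using ballot_card_le[of "{1..n}"] d2 assms(1) by fastforce
  have "(\<Sum>p \<in> {p \<in> inv321 n. fp n p = l \<and> des n p = k}. monom (1::int) (maj n p))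
      = (\<Sum>C | ballot {1..n} C \<and> card C = d \<and> card (rises C) = k. monom 1 (\<Sum>(rises C)))"
    unfolding card_d[symmetric] by (rule sum_inv321_eq_sum_ballots)
  also have "\<dots> = ballot_gf d (n - d) k - (if d = 0 then 0 else ballot_gf (d - 1) (Suc (n - d)) k)"
  proof (cases d)
    case 0
    then have "{C. ballot {1..n} C \<and> card C = d \<and> card (rises C) = k} = ballots n 0 k"
      by (auto simp: ballots_def)
    then show ?thesis using rise_gf_eq_ballot_gf[of 0 n k] 0 by (simp add: rise_gf_def)
  next
    case (Suc d')
    then have "{C. ballot {1..n} C \<and> card C = d \<and> card (rises C) = k}
             = ballots n d k - ballots n d' k"
      by (auto simp: ballots_def)
    moreover have "ballots n d' k \<subseteq> ballots n d k" using Suc by (auto simp: ballots_def)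
    moreover have "n - d' = Suc (n - d)" using d2 Suc by linarith
    ultimately show ?thesis
      using rise_gf_eq_ballot_gf[of d n k] rise_gf_eq_ballot_gf[of d' n k] d2 Suc
      by (simp add: rise_gf_def sum_diff finite_ballots Suc_diff_le)
  qed
  also have "\<dots> = monom 1 (k^2) *
      (qbinz (int d) k * qbinz (int (n - d)) k - qbinz (int d - 1) k * qbinz (int (n - d) + 1) k)"
    by (rule ballot_gf_diff_qbinz[symmetric])
  finally show ?thesis unfolding d_def[symmetric] upper .
qed

theorem mainTheorem14:
  shows "(\<forall>a b k :: nat. a \<le> b \<longrightarrow>
            (\<Sum>p \<in> {p \<in> inv321 (a + b). fp (a + b) p \<ge> b - a \<and> des (a + b) p = k}.
                monom (1::int) (maj (a + b) p))
            = monom 1 (k^2) * qbin a k * qbin b k)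
       \<and> (\<forall>n l k :: nat. l \<le> n \<longrightarrow> l mod 2 = n mod 2 \<longrightarrow>
            (\<Sum>p \<in> {p \<in> inv321 n. fp n p = l \<and> des n p = k}.
                monom (1::int) (maj n p))
            = monom 1 (k^2) *
              (qbinz (int ((n - l) div 2)) k * qbinz (int ((n + l) div 2)) k
               - qbinz (int ((n - l) div 2) - 1) k * qbinz (int ((n + l) div 2) + 1) k))"
  using sum_inv321_fp_ge sum_inv321_fp_eq by (simp add: ballot_gf_def)

end
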